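(* Let $f$ be a transcendental entire function with a finite logarithmic asymptotic value $\alpha\in\mathbb{C}$. Let $r>0$ be sufficiently small that $f$ is a universal covering from a component $T$ of $f^{-1}(B(\alpha,r))$ onto $B(\alpha,r)\setminus\{\alpha\}$. Then there exist $R>0$ and a component $V$ of $T\cap B(0,R)$ such that the following holds: whenever $\gamma\subset\mathbb{C}\setminus\overline{B(0,R)}$ is a continuum such that $V$ lies in a bounded component of $T\setminus\gamma$, the component of $\mathbb{C}\setminus f(\gamma\cap T)$ containing $\alpha$ lies in $B(\alpha,r)$.
   Context: $B(a,r)=\{z\in\mathbb{C}:|z-a|<r\}$. A value $\alpha\in\mathbb{C}$ is a finite logarithmic asymptotic value of $f$ if there exist $r>0$ and a component $U$ of $f^{-1}(B(\alpha,r))$ such that $f:U\to B(\alpha,r)\setminus\{\alpha\}$ is a universal covering. *)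

theory Defs
  imports "HOL-Complex_Analysis.Complex_Analysis"
begin

definition transcendental_entire :: "(complex \<Rightarrow> complex) \<Rightarrow> bool" where
  "transcendental_entire f \<longleftrightarrow> f holomorphic_on UNIV \<and> \<not> (\<exists>p. \<forall>z. f z = poly p z)"

definition continuum :: "complex set \<Rightarrow> bool" where
  "continuum K \<longleftrightarrow> K \<noteq> {} \<and> compact K \<and> connected K"

definition universal_covering :: "complex set \<Rightarrow> (complex \<Rightarrow> complex) \<Rightarrow> complex set \<Rightarrow> bool" where
  "universal_covering U f S \<longleftrightarrow> covering_space U f S \<and> simply_connected U"

end

theory Submission
  imports Defs
begin

text \<open>Lift the circle of radius \<open>r/2\<close> about \<open>\<alpha>\<close> through the covering \<open>f : T \<rightarrow> B(\<alpha>,r) - {\<alpha>}\<close>;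
  its lift is a compact connected set, and \<open>V\<close> is the component of \<open>T \<inter> B(0,R)\<close> containing it
  for any \<open>R\<close> large enough. If \<open>W\<close> is the bounded component of \<open>T - \<gamma>\<close> containing \<open>V\<close>, then
  \<open>f(W)\<close> is open, omits \<open>\<alpha>\<close> and contains the circle, and every frontier point of \<open>f(W)\<close> inside
  \<open>B(\<alpha>,r)\<close> is the image of a point of \<open>\<gamma> \<inter> T\<close>: by compactness it is the image of a point of
  \<open>closure W\<close>, which lies in \<open>T\<close> because \<open>T\<close> is a component of \<open>f\<^sup>-\<^sup>1(B(\<alpha>,r))\<close>, and outside \<open>\<gamma>\<close>
  it would already lie in \<open>W\<close>. Hence the component of \<open>\<alpha>\<close> in the complement of \<open>f(\<gamma> \<inter> T)\<close>
  cannot cross the frontier of \<open>B(\<alpha>,r/2) - f(W)\<close> and stays inside the disc of radius \<open>r/2\<close>.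
  Transcendence of \<open>f\<close> is used only to make \<open>f\<close> an open mapping.\<close>

lemma closure_Int_component: "C \<in> components U \<Longrightarrow> closure C \<inter> U = C"
proof -
  assume "C \<in> components U"
  then obtain X where "closed X" "C = U \<inter> X"
    using closedin_component closedin_closed by metis
  then have "closure C \<subseteq> X"
    by (simp add: closure_minimal)
  with \<open>C = U \<inter> X\<close> show ?thesis
    using closure_subset by blast
qed

lemma closure_image_subset_image_closure:
  fixes f :: "'a::heine_borel \<Rightarrow> 'b::t2_space"
  assumes "continuous_on UNIV f" "bounded W"
  shows "closure (f ` W) \<subseteq> f ` closure W"
proof -
  have "compact (f ` closure W)"
    using assms by (meson compact_closure compact_continuous_image continuous_on_subset subset_UNIV)
  then show ?thesis
    by (meson closure_minimal closure_subset compact_imp_closed image_mono)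
qed

lemma closure_image_component_Diff:
  fixes f :: "'a::heine_borel \<Rightarrow> 'b::t2_space"
  assumes "continuous_on UNIV f" "T \<in> components (f -` B)"
    and "W \<in> components (T - \<gamma>)" "bounded W"
  shows "closure (f ` W) \<inter> B \<subseteq> f ` W \<union> f ` (\<gamma> \<inter> T)"
proof
  fix \<zeta> assume \<zeta>: "\<zeta> \<in> closure (f ` W) \<inter> B"
  then obtain z where z: "z \<in> closure W" "\<zeta> = f z"
    using closure_image_subset_image_closure[OF assms(1,4)] by blast
  have "closure W \<subseteq> closure T"
    using assms(3) in_components_subset closure_mono by blast
  then have "z \<in> T"
    using closure_Int_component[OF assms(2)] z \<zeta> by blast
  moreover have "z \<in> W" if "z \<notin> \<gamma>"
    using closure_Int_component[OF assms(3)] z that \<open>z \<in> T\<close> by blast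
  ultimately show "\<zeta> \<in> f ` W \<union> f ` (\<gamma> \<inter> T)"
    using z by blast
qed

lemma connected_component_Compl_subset_ball:
  fixes G :: "'a::real_normed_vector set"
  assumes "0 < \<rho>" "open G" "sphere a \<rho> \<subseteq> G" "a \<notin> G" "frontier G \<inter> ball a \<rho> \<subseteq> E"
  shows "connected_component_set (- E) a \<subseteq> ball a \<rho>"
proof (rule ccontr)
  define K where "K = connected_component_set (- E) a"
  define S where "S = ball a \<rho> - G"
  assume "\<not> K \<subseteq> ball a \<rho>"
  then have "K \<noteq> {}"
    by blast
  then have "a \<in> - E"
    unfolding K_def by (metis connected_component_eq_empty)
  then have "a \<in> K"
    unfolding K_def by simp
  moreover have "a \<in> S"
    using assms(1,4) S_def by simp
  moreover have "K - S \<noteq> {}"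
    using \<open>\<not> K \<subseteq> ball a \<rho>\<close> S_def by blast
  ultimately obtain \<zeta> where "\<zeta> \<in> K" "\<zeta> \<in> frontier S"
    using connected_Int_frontier[of K S] K_def by blast
  have "\<zeta> \<notin> G"
    using \<open>\<zeta> \<in> frontier S\<close> assms(2) open_Int_closure_eq_empty[of G S]
    unfolding S_def frontier_def by blast
  moreover have "closure S \<subseteq> cball a \<rho>"
    unfolding S_def by (metis Diff_subset ball_subset_cball closed_cball closure_minimal order_trans)
  ultimately have "\<zeta> \<in> ball a \<rho>"
    using \<open>\<zeta> \<in> frontier S\<close> assms(3) unfolding frontier_def by (auto simp: less_le)
  have "\<zeta> \<in> closure (- S)"
    using \<open>\<zeta> \<in> frontier S\<close> by (simp add: frontier_def interior_closure)
  also have "- S = - ball a \<rho> \<union> G"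
    unfolding S_def by blast
  finally have "\<zeta> \<in> closure G"
    using \<open>\<zeta> \<in> ball a \<rho>\<close> by (simp add: closed_Compl)
  then have "\<zeta> \<in> E"
    using \<open>\<zeta> \<notin> G\<close> \<open>\<zeta> \<in> ball a \<rho>\<close> assms(2,5) by (auto simp: frontier_def interior_open)
  then show False
    using \<open>\<zeta> \<in> K\<close> K_def connected_component_subset by blast
qed

lemma covering_space_lift_path_image:
  fixes p :: "'a::real_normed_vector \<Rightarrow> 'b::real_normed_vector"
  assumes "covering_space C p S" "path g" "path_image g \<subseteq> S"
  obtains K where "compact K" "connected K" "K \<subseteq> C" "p ` K = path_image g"
proof -
  obtain h where h: "path h" "path_image h \<subseteq> C" "\<And>t. t \<in> {0..1} \<Longrightarrow> p (h t) = g t"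
    using covering_space_lift_path[OF assms] by blast
  have "p ` path_image h = path_image g"
    unfolding path_image_def image_comp using h(3) by (intro image_cong) auto
  with h show ?thesis
    using that compact_path_image connected_path_image by blast
qed

lemma transcendental_entire_open_image:
  assumes "transcendental_entire f" "open W"
  shows "open (f ` W)"
proof -
  have holf: "f holomorphic_on UNIV" and npoly: "\<not> (\<exists>p. \<forall>z. f z = poly p z)"
    using assms(1) unfolding transcendental_entire_def by auto
  have "\<not> f constant_on UNIV"
  proof
    assume "f constant_on UNIV"
    then obtain c where "\<And>z. f z = c"
      unfolding constant_on_def by blast
    then have "\<forall>z. f z = poly [:c:] z"
      by simp
    with npoly show False
      by blast
  qed
  then show ?thesis
    using open_mapping_thm[OF holf open_UNIV connected_UNIV assms(2)] by simp
qed

lemma connected_component_Compl_image_subset_ball: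
  assumes "transcendental_entire f" "T \<in> components (f -` ball \<alpha> r)" "\<alpha> \<notin> f ` T"
    and "0 < \<rho>" "\<rho> \<le> r" "closed \<gamma>" "W \<in> components (T - \<gamma>)" "bounded W" "sphere \<alpha> \<rho> \<subseteq> f ` W"
  shows "connected_component_set (- f ` (\<gamma> \<inter> T)) \<alpha> \<subseteq> ball \<alpha> \<rho>"
proof (rule connected_component_Compl_subset_ball[OF \<open>0 < \<rho>\<close> _ \<open>sphere \<alpha> \<rho> \<subseteq> f ` W\<close>])
  have contf: "continuous_on UNIV f"
    using assms(1) holomorphic_on_imp_continuous_on unfolding transcendental_entire_def by blast
  have "open T"
    using assms(2) open_components open_vimage[OF open_ball contf] by blast
  then show "open (f ` W)"
    using assms(6,7) open_components transcendental_entire_open_image[OF assms(1)]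
    by (metis open_Diff)
  show "\<alpha> \<notin> f ` W"
    using assms(3,7) in_components_subset by blast
  show "frontier (f ` W) \<inter> ball \<alpha> \<rho> \<subseteq> f ` (\<gamma> \<inter> T)"
    using closure_image_component_Diff[OF contf assms(2,7,8)] \<open>\<rho> \<le> r\<close> \<open>open (f ` W)\<close>
    by (auto simp: frontier_def interior_open)
qed

theorem lemma2p4:
  fixes f :: "complex \<Rightarrow> complex" and \<alpha> :: complex and r :: real and T :: "complex set"
  assumes "transcendental_entire f"
    and "r > 0"
    and "T \<in> components (f -` ball \<alpha> r)"
    and "universal_covering T f (ball \<alpha> r - {\<alpha>})"
  shows "\<exists>R>0. \<exists>V. V \<in> components (T \<inter> ball 0 R) \<and>
           (\<forall>\<gamma>. continuum \<gamma> \<and> \<gamma> \<subseteq> - cball 0 R \<and>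
                 (\<exists>W \<in> components (T - \<gamma>). bounded W \<and> V \<subseteq> W)
               \<longrightarrow> connected_component_set (- f ` (\<gamma> \<inter> T)) \<alpha> \<subseteq> ball \<alpha> r)"
proof -
  define \<rho> where "\<rho> = r / 2"
  have \<rho>: "0 < \<rho>" "\<rho> < r"
    using assms(2) \<rho>_def by auto
  have cov: "covering_space T f (ball \<alpha> r - {\<alpha>})"
    using assms(4) unfolding universal_covering_def by blast
  have circle: "path_image (circlepath \<alpha> \<rho>) = sphere \<alpha> \<rho>"
    using \<rho>(1) by simp
  also have "\<dots> \<subseteq> ball \<alpha> r - {\<alpha>}"
    using \<rho> by (auto simp: dist_commute)
  finally obtain \<sigma> where \<sigma>: "compact \<sigma>" "connected \<sigma>" "\<sigma> \<subseteq> T" "f ` \<sigma> = sphere \<alpha> \<rho>"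
    using covering_space_lift_path_image[OF cov path_circlepath] circle by metis
  obtain R where R: "R > 0" "\<sigma> \<subseteq> ball 0 R"
    using \<sigma>(1) compact_imp_bounded bounded_subset_ballD by blast
  have "\<sigma> \<noteq> {}"
    using \<sigma>(4) \<rho>(1) by (metis image_empty sphere_eq_empty less_asym)
  then obtain V where V: "V \<in> components (T \<inter> ball 0 R)" "\<sigma> \<subseteq> V"
    using exists_component_superset[of \<sigma> "T \<inter> ball 0 R"] \<sigma>(2,3) R(2) by blast
  have "\<alpha> \<notin> f ` T"
    using covering_space_imp_surjective[OF cov] by blast
  have "connected_component_set (- f ` (\<gamma> \<inter> T)) \<alpha> \<subseteq> ball \<alpha> r"
    if "closed \<gamma>" "W \<in> components (T - \<gamma>)" "bounded W" "V \<subseteq> W" for \<gamma> W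
  proof -
    have "sphere \<alpha> \<rho> \<subseteq> f ` W"
      using \<sigma>(4) V(2) that(4) by blast
    then have "connected_component_set (- f ` (\<gamma> \<inter> T)) \<alpha> \<subseteq> ball \<alpha> \<rho>"
      using connected_component_Compl_image_subset_ball[OF assms(1,3) \<open>\<alpha> \<notin> f ` T\<close> \<rho>(1)]
        \<rho>(2) that(1-3) by simp
    with \<rho>(2) show ?thesis
      by auto
  qed
  with R(1) V(1) show ?thesis
    unfolding continuum_def by (blast intro: compact_imp_closed)
qed

end
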